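(* For all $0<b\le B\le1$ and every integer $n\ge1$, $$\textsc{PoF-Reward-Submodular}(b,B)=\textsc{PoF-Welfare-Submodular}(b,B)=\min\big(\lceil 2B/b\rceil-1,\,n\big)\le\min(2B/b,\,n).$$
   Context: An instance $\langle A,f,c\rangle$ consists of a finite set $A$ of agents, a monotone nondecreasing $f:2^A\to[0,1]$, and costs $c_i\ge0$. For $S\subseteq A$, $i\in S$: $f_S(i)=f(S)-f(S\setminus\{i\})$; $p(S)=\sum_{i\in S}c_i/f_S(i)$ (conventions: $0$ if $c_i=0=f_S(i)$, $\infty$ if $c_i>0=f_S(i)$). $f$ is submodular if $f_S(i)\ge f_{S'}(i)$ whenever $S\subseteq S'$, $i\in S$. For an objective $\varphi$ (assigning to each instance and $S\subseteq A$ a real $\varphi(S)$), $\textsc{Max-}\varphi(B)=\max\{\varphi(S):p(S)\le B\}$ and, for an instance, $\textsc{PoF-}\varphi(b,B)=\textsc{Max-}\varphi(B)/\textsc{Max-}\varphi(b)$. The reward objective is $\varphi(S)=f(S)$ and the welfare objective is $\varphi(S)=f(S)-\sum_{i\in S}c_i$. $\textsc{PoF-Reward-Submodular}(b,B)$ (resp. $\textsc{PoF-Welfare-Submodular}(b,B)$) is the supremum of $\textsc{PoF-}\varphi(b,B)$ for the reward (resp. welfare) objective over all instances with submodular $f$, at most $n$ agents, and $\max_{i\in A}p(\{i\})\le b$. *)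

theory Defs
  imports "HOL-Analysis.Analysis"
begin

definition marg :: "(nat set \<Rightarrow> real) \<Rightarrow> nat set \<Rightarrow> nat \<Rightarrow> real" where
  "marg f S i = f S - f (S - {i})"

definition pay :: "(nat set \<Rightarrow> real) \<Rightarrow> (nat \<Rightarrow> real) \<Rightarrow> nat set \<Rightarrow> ereal" where
  "pay f c S = (\<Sum>i\<in>S. if marg f S i = 0 then (if c i = 0 then 0 else \<infinity>)
                        else ereal (c i / marg f S i))"

definition valid_instance :: "nat set \<Rightarrow> (nat set \<Rightarrow> real) \<Rightarrow> (nat \<Rightarrow> real) \<Rightarrow> bool" where
  "valid_instance A f c \<longleftrightarrow> finite A
     \<and> (\<forall>S. S \<subseteq> A \<longrightarrow> 0 \<le> f S \<and> f S \<le> 1)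
     \<and> (\<forall>S T. S \<subseteq> T \<longrightarrow> T \<subseteq> A \<longrightarrow> f S \<le> f T)
     \<and> (\<forall>i\<in>A. 0 \<le> c i)"

definition submodular_on :: "nat set \<Rightarrow> (nat set \<Rightarrow> real) \<Rightarrow> bool" where
  "submodular_on A f \<longleftrightarrow>
     (\<forall>S S' i. S \<subseteq> S' \<longrightarrow> S' \<subseteq> A \<longrightarrow> i \<in> S \<longrightarrow> marg f S' i \<le> marg f S i)"

definition reward_obj :: "(nat set \<Rightarrow> real) \<Rightarrow> (nat \<Rightarrow> real) \<Rightarrow> nat set \<Rightarrow> real" where
  "reward_obj f c S = f S"

definition welfare_obj :: "(nat set \<Rightarrow> real) \<Rightarrow> (nat \<Rightarrow> real) \<Rightarrow> nat set \<Rightarrow> real" where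
  "welfare_obj f c S = f S - (\<Sum>i\<in>S. c i)"

definition max_obj ::
  "((nat set \<Rightarrow> real) \<Rightarrow> (nat \<Rightarrow> real) \<Rightarrow> nat set \<Rightarrow> real)
   \<Rightarrow> nat set \<Rightarrow> (nat set \<Rightarrow> real) \<Rightarrow> (nat \<Rightarrow> real) \<Rightarrow> real \<Rightarrow> real" where
  "max_obj phi A f c B = Max {phi f c S | S. S \<subseteq> A \<and> pay f c S \<le> ereal B}"

definition pof ::
  "((nat set \<Rightarrow> real) \<Rightarrow> (nat \<Rightarrow> real) \<Rightarrow> nat set \<Rightarrow> real)
   \<Rightarrow> nat set \<Rightarrow> (nat set \<Rightarrow> real) \<Rightarrow> (nat \<Rightarrow> real) \<Rightarrow> real \<Rightarrow> real \<Rightarrow> real" where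
  "pof phi A f c b B = max_obj phi A f c B / max_obj phi A f c b"

definition PoF_Submodular ::
  "((nat set \<Rightarrow> real) \<Rightarrow> (nat \<Rightarrow> real) \<Rightarrow> nat set \<Rightarrow> real) \<Rightarrow> nat \<Rightarrow> real \<Rightarrow> real \<Rightarrow> ereal" where
  "PoF_Submodular phi n b B =
     (SUP I \<in> {(A, f, c). valid_instance A f c \<and> submodular_on A f \<and> card A \<le> n
                 \<and> (\<forall>i\<in>A. pay f c {i} \<le> ereal b)}.
        ereal (case I of (A, f, c) \<Rightarrow> pof phi A f c b B))"

abbreviation "PoF_Reward_Submodular \<equiv> PoF_Submodular reward_obj"
abbreviation "PoF_Welfare_Submodular \<equiv> PoF_Submodular welfare_obj"

end

theory Submission
  imports Defs
begin

(* Upper bound: take a contract S optimal for budget B and pack its agents into bins of capacity b,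
   the weight of agent i being its payment c_i / f_S(i) under S. By submodularity a subset of S
   costs at most its weight under S, so every bin (of weight at most b, or a single agent) is
   affordable with budget b. In a packing with the fewest bins any two bins weigh more than b
   together, so m bins weigh more than m b / 2 while the total weight is p(S) <= B; hence
   m <= ceil(2B/b) - 1, and m <= n. Submodularity makes both objectives subadditive over disjoint
   sets, so phi(S) is at most m times Max-phi(b).
   Lower bound: K = min(ceil(2B/b) - 1, n) agents with f(T) = |T|/K, each costing t/K with t just
   above b/2; then p(T) = |T| t, so budget b affords one agent and budget B affords all K. *)

section \<open>Bin packing\<close>

definition bin_packing :: "real \<Rightarrow> ('a \<Rightarrow> real) \<Rightarrow> 'a set \<Rightarrow> 'a set set \<Rightarrow> bool" where
  "bin_packing b w S PP \<longleftrightarrow> partition_on S PP \<and> (\<forall>P\<in>PP. card P = 1 \<or> sum w P \<le> b)"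

lemma partition_on_merge:
  assumes part: "partition_on S PP" and "finite PP" and P: "P \<in> PP" and Q: "Q \<in> PP" and "P \<noteq> Q"
  shows "partition_on S (insert (P \<union> Q) (PP - {P, Q}))"
    and "card (insert (P \<union> Q) (PP - {P, Q})) < card PP"
proof -
  have disj: "disjnt R R'" if "R \<in> PP" "R' \<in> PP" "R \<noteq> R'" for R R'
    using part that by (auto simp: partition_on_def pairwise_def)
  have "P \<noteq> {}" using part P by (auto simp: partition_on_def)
  then have new: "P \<union> Q \<notin> PP - {P, Q}"
    using disj[OF _ P] by (auto simp: disjnt_def)
  show "partition_on S (insert (P \<union> Q) (PP - {P, Q}))"
    using part P Q disj by (auto simp: partition_on_def pairwise_def disjnt_def)
  have "card {P, Q} \<le> card PP" using P Q \<open>finite PP\<close> by (intro card_mono) auto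
  then have "2 \<le> card PP" using \<open>P \<noteq> Q\<close> by simp
  then show "card (insert (P \<union> Q) (PP - {P, Q})) < card PP"
    using new P Q \<open>P \<noteq> Q\<close> \<open>finite PP\<close> by (simp add: card_Diff_subset)
qed

lemma card_mult_half_less_sum:
  fixes x :: "'a \<Rightarrow> real"
  assumes "finite I" "2 \<le> card I" and pair: "\<And>i j. i \<in> I \<Longrightarrow> j \<in> I \<Longrightarrow> i \<noteq> j \<Longrightarrow> b < x i + x j"
  shows "real (card I) * b / 2 < sum x I"
proof -
  have "I \<noteq> {}" using assms(2) by auto
  then obtain i0 where i0: "i0 \<in> I" and least: "\<And>j. j \<in> I \<Longrightarrow> x i0 \<le> x j"
    using arg_min_if_finite[OF \<open>finite I\<close>, of x] by (metis not_le order.strict_implies_order)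
  define m where "m = real (card I) - 1"
  have m: "real (card (I - {i0})) = m" "1 \<le> m"
    using assms(1,2) i0 unfolding m_def by auto
  have split: "sum x I = x i0 + sum x (I - {i0})"
    using assms(1) i0 by (simp add: sum.remove)
  show ?thesis
  proof (cases "x i0 \<le> b / 2")
    case True
    have "b - x i0 < x j" if "j \<in> I - {i0}" for j
      using pair[OF i0, of j] that by auto
    moreover have "I - {i0} \<noteq> {}" using m by (cases "I - {i0} = {}") auto
    ultimately have "(\<Sum>j\<in>I - {i0}. b - x i0) < sum x (I - {i0})"
      using assms(1) by (intro sum_strict_mono) auto
    then have "m * (b - x i0) < sum x (I - {i0})" using m by simp
    moreover have "(m - 1) * (b / 2 - x i0) \<ge> 0" using True m by simp
    ultimately show ?thesis using split unfolding m_def by (simp add: algebra_simps)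
  next
    case False
    have "(\<Sum>j\<in>I - {i0}. x i0) \<le> sum x (I - {i0})"
      using least by (intro sum_mono) auto
    then have "m * x i0 \<le> sum x (I - {i0})" using m by simp
    moreover have "(m + 1) * (b / 2) < (m + 1) * x i0" using False m by simp
    ultimately show ?thesis using split unfolding m_def by (simp add: algebra_simps)
  qed
qed

lemma bin_packing_exists:
  assumes "finite S"
  shows "\<exists>PP. bin_packing b w S PP \<and> card PP \<le> card S
              \<and> (card PP \<le> 1 \<or> real (card PP) * b / 2 < sum w S)"
proof -
  have singletons: "bin_packing b w S ((\<lambda>i. {i}) ` S)"
    unfolding bin_packing_def using partition_on_singletons by auto
  obtain PP where packing: "bin_packing b w S PP"
    and least: "\<And>PP'. bin_packing b w S PP' \<Longrightarrow> card PP \<le> card PP'"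
    using ex_has_least_nat[of "bin_packing b w S", OF singletons, of card] by blast
  have part: "partition_on S PP" and fits: "\<forall>P\<in>PP. card P = 1 \<or> sum w P \<le> b"
    using packing unfolding bin_packing_def by auto
  have "finite PP" using finite_elements[OF assms part] .
  have blocks_finite: "\<And>P. P \<in> PP \<Longrightarrow> finite P"
    using part assms by (metis partition_onD1 Union_upper finite_subset)
  have "card PP \<le> card ((\<lambda>i. {i}) ` S)" by (rule least[OF singletons])
  then have "card PP \<le> card S" using card_image_le[OF assms] by (metis order_trans)
  moreover have "real (card PP) * b / 2 < sum w S" if "\<not> card PP \<le> 1"
  proof -
    have "b < sum w P + sum w Q" if "P \<in> PP" "Q \<in> PP" "P \<noteq> Q" for P Q
    proof (rule ccontr)
      have "disjnt P Q" using part that by (auto simp: partition_on_def pairwise_def)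
      then have "sum w (P \<union> Q) = sum w P + sum w Q"
        using blocks_finite that by (simp add: disjnt_def sum.union_disjoint)
      moreover assume "\<not> b < sum w P + sum w Q"
      ultimately have "bin_packing b w S (insert (P \<union> Q) (PP - {P, Q}))"
        using partition_on_merge(1)[OF part \<open>finite PP\<close> that] fits by (auto simp: bin_packing_def)
      with least partition_on_merge(2)[OF part \<open>finite PP\<close> that] show False by fastforce
    qed
    then have "real (card PP) * b / 2 < (\<Sum>P\<in>PP. sum w P)"
      using \<open>finite PP\<close> \<open>\<not> card PP \<le> 1\<close> by (intro card_mult_half_less_sum) auto
    also have "\<dots> = sum w S"
      using sum.Union_disjoint[of PP w] part blocks_finite
      by (auto simp: partition_on_def pairwise_def disjnt_def)
    finally show ?thesis .
  qed
  ultimately show ?thesis using packing by blast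
qed

section \<open>Subadditivity of submodular objectives\<close>

lemma valid_instanceD:
  assumes "valid_instance A f c"
  shows "finite A" and "S \<subseteq> A \<Longrightarrow> 0 \<le> f S" and "S \<subseteq> T \<Longrightarrow> T \<subseteq> A \<Longrightarrow> f S \<le> f T"
    and "i \<in> A \<Longrightarrow> 0 \<le> c i"
  using assms unfolding valid_instance_def by auto

lemma submodular_onD:
  "submodular_on A f \<Longrightarrow> S \<subseteq> S' \<Longrightarrow> S' \<subseteq> A \<Longrightarrow> i \<in> S \<Longrightarrow> marg f S' i \<le> marg f S i"
  unfolding submodular_on_def by blast

definition disjoint_subadditive_on :: "'a set \<Rightarrow> ('a set \<Rightarrow> real) \<Rightarrow> bool" where
  "disjoint_subadditive_on A g \<longleftrightarrow>
     (\<forall>PP. finite PP \<longrightarrow> PP \<noteq> {} \<longrightarrow> disjoint PP \<longrightarrow> \<Union>PP \<subseteq> A \<longrightarrow> g (\<Union>PP) \<le> (\<Sum>P\<in>PP. g P))"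

lemma disjoint_subadditive_onD:
  "disjoint_subadditive_on A g \<Longrightarrow> finite PP \<Longrightarrow> PP \<noteq> {} \<Longrightarrow> disjoint PP \<Longrightarrow> \<Union>PP \<subseteq> A
    \<Longrightarrow> g (\<Union>PP) \<le> (\<Sum>P\<in>PP. g P)"
  unfolding disjoint_subadditive_on_def by blast

lemma submodular_on_disjoint_Un:
  assumes sm: "submodular_on A f" and "finite X" "X \<inter> Y = {}" "X \<union> Y \<subseteq> A"
  shows "f (X \<union> Y) + f {} \<le> f X + f Y"
  using assms(2-)
proof (induction X rule: finite_induct)
  case (insert x X)
  have "marg f (insert x (X \<union> Y)) x \<le> marg f (insert x X) x"
    using insert.prems by (intro submodular_onD[OF sm]) auto
  moreover have "insert x (X \<union> Y) - {x} = X \<union> Y" "insert x X - {x} = X"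
    using insert.hyps insert.prems by auto
  ultimately have "f (insert x (X \<union> Y)) - f (X \<union> Y) \<le> f (insert x X) - f X"
    by (simp add: marg_def)
  with insert.IH insert.prems show ?case by simp
qed simp

lemma submodular_on_disjoint_subadditive_on:
  assumes "submodular_on A f" "finite A" "0 \<le> f {}"
  shows "disjoint_subadditive_on A f"
  unfolding disjoint_subadditive_on_def
proof (intro allI impI)
  fix PP assume "finite PP" "PP \<noteq> {}" "disjoint PP" "\<Union>PP \<subseteq> A"
  then show "f (\<Union>PP) \<le> (\<Sum>P\<in>PP. f P)"
  proof (induction PP rule: finite_ne_induct)
    case (insert P PP)
    have "P \<inter> \<Union>PP = {}"
      using insert.hyps(3) insert.prems(1) by (auto simp: pairwise_insert disjnt_def)
    moreover have "finite P" using insert.prems(2) \<open>finite A\<close> finite_subset by auto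
    ultimately have "f (P \<union> \<Union>PP) + f {} \<le> f P + f (\<Union>PP)"
      using insert.prems(2) by (intro submodular_on_disjoint_Un[OF assms(1)]) auto
    moreover have "f (\<Union>PP) \<le> (\<Sum>P\<in>PP. f P)"
      using insert.IH insert.prems by (simp add: pairwise_insert)
    ultimately show ?case using insert.hyps \<open>0 \<le> f {}\<close> by simp
  qed simp
qed

lemma disjoint_subadditive_on_welfare_obj:
  assumes "disjoint_subadditive_on A f" "finite A"
  shows "disjoint_subadditive_on A (welfare_obj f c)"
  unfolding disjoint_subadditive_on_def
proof (intro allI impI)
  fix PP assume PP: "finite PP" "PP \<noteq> {}" "disjoint PP" "\<Union>PP \<subseteq> A"
  have "\<forall>P\<in>PP. finite P"
    using PP(4) \<open>finite A\<close> by (meson Union_upper finite_subset subset_trans)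
  then have "sum c (\<Union>PP) = (\<Sum>P\<in>PP. sum c P)"
    using sum.Union_disjoint[of PP c] PP(3) by (auto simp: pairwise_def disjnt_def)
  moreover have "f (\<Union>PP) \<le> (\<Sum>P\<in>PP. f P)"
    using PP by (intro disjoint_subadditive_onD[OF assms(1)])
  ultimately show "welfare_obj f c (\<Union>PP) \<le> (\<Sum>P\<in>PP. welfare_obj f c P)"
    by (simp add: welfare_obj_def sum_subtractf)
qed

lemma reward_obj_subadditive:
  assumes "valid_instance A f c" "submodular_on A f"
  shows "disjoint_subadditive_on A (reward_obj f c) \<and> 0 \<le> reward_obj f c {}"
proof -
  have "reward_obj f c = f" by (simp add: fun_eq_iff reward_obj_def)
  then show ?thesis using submodular_on_disjoint_subadditive_on[OF assms(2)] valid_instanceD[OF assms(1)]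
    by simp
qed

lemma welfare_obj_subadditive:
  assumes "valid_instance A f c" "submodular_on A f"
  shows "disjoint_subadditive_on A (welfare_obj f c) \<and> 0 \<le> welfare_obj f c {}"
  using disjoint_subadditive_on_welfare_obj submodular_on_disjoint_subadditive_on[OF assms(2)]
    valid_instanceD[OF assms(1)] by (simp add: welfare_obj_def)

section \<open>Payments and optimal contracts\<close>

definition payment :: "(nat set \<Rightarrow> real) \<Rightarrow> (nat \<Rightarrow> real) \<Rightarrow> nat set \<Rightarrow> nat \<Rightarrow> real" where
  "payment f c S i = (if marg f S i = 0 then 0 else c i / marg f S i)"

lemma marg_nonneg:
  assumes "valid_instance A f c" "S \<subseteq> A"
  shows "0 \<le> marg f S i"
  using valid_instanceD(3)[OF assms(1), of "S - {i}" S] assms(2) unfolding marg_def by auto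

lemma pay_finite_cost_eq_0:
  assumes "finite S" "pay f c S < \<infinity>" "i \<in> S" "marg f S i = 0"
  shows "c i = 0"
proof (rule ccontr)
  assume "c i \<noteq> 0"
  then have "pay f c S = \<infinity>"
    using assms unfolding pay_def sum_Pinfty by (auto intro!: bexI[of _ i])
  with assms(2) show False by simp
qed

lemma pay_eq_sum_payment:
  assumes "finite S" "pay f c S < \<infinity>"
  shows "pay f c S = ereal (sum (payment f c S) S)"
proof -
  have "pay f c S = (\<Sum>i\<in>S. ereal (payment f c S i))"
    unfolding pay_def payment_def
    using pay_finite_cost_eq_0[OF assms] by (intro sum.cong) auto
  then show ?thesis by simp
qed

lemma pay_subset_le_sum_payment:
  assumes vi: "valid_instance A f c" and sm: "submodular_on A f" and "S \<subseteq> A"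
    and pS: "pay f c S < \<infinity>" and "T \<subseteq> S"
  shows "pay f c T \<le> ereal (sum (payment f c S) T)"
proof -
  have "finite S" using valid_instanceD(1)[OF vi] \<open>S \<subseteq> A\<close> finite_subset by blast
  have "pay f c T \<le> (\<Sum>i\<in>T. ereal (payment f c S i))"
    unfolding pay_def
  proof (rule sum_mono)
    fix i assume "i \<in> T"
    have mono: "marg f S i \<le> marg f T i"
      by (rule submodular_onD[OF sm \<open>T \<subseteq> S\<close> \<open>S \<subseteq> A\<close> \<open>i \<in> T\<close>])
    have "0 \<le> c i" using valid_instanceD(4)[OF vi] \<open>i \<in> T\<close> \<open>T \<subseteq> S\<close> \<open>S \<subseteq> A\<close> by blast
    show "(if marg f T i = 0 then if c i = 0 then 0 else \<infinity> else ereal (c i / marg f T i))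
          \<le> ereal (payment f c S i)"
    proof (cases "marg f S i = 0")
      case True
      then have "c i = 0"
        using pay_finite_cost_eq_0[OF \<open>finite S\<close> pS] \<open>i \<in> T\<close> \<open>T \<subseteq> S\<close> by blast
      then show ?thesis by (simp add: payment_def)
    next
      case False
      then have "0 < marg f S i" using marg_nonneg[OF vi \<open>S \<subseteq> A\<close>, of i] by simp
      then have "c i / marg f T i \<le> c i / marg f S i"
        using mono \<open>0 \<le> c i\<close> by (intro divide_left_mono) auto
      then show ?thesis using \<open>0 < marg f S i\<close> mono False by (simp add: payment_def)
    qed
  qed
  then show ?thesis by simp
qed

lemma finite_affordable_values:
  "finite A \<Longrightarrow> finite {phi f c S | S. S \<subseteq> A \<and> pay f c S \<le> ereal x}"
  by (rule finite_subset[of _ "phi f c ` Pow A"]) auto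

lemma max_obj_ge:
  assumes "finite A" "S \<subseteq> A" "pay f c S \<le> ereal x"
  shows "phi f c S \<le> max_obj phi A f c x"
  unfolding max_obj_def using finite_affordable_values[OF assms(1)] assms(2,3) by (intro Max_ge) auto

lemma max_obj_ge_empty:
  assumes "finite A" "0 \<le> x"
  shows "phi f c {} \<le> max_obj phi A f c x"
  using assms by (intro max_obj_ge) (auto simp: pay_def)

lemma max_obj_attained:
  assumes "finite A" "0 \<le> x"
  obtains S where "S \<subseteq> A" "pay f c S \<le> ereal x" "phi f c S = max_obj phi A f c x"
proof -
  have "phi f c {} \<in> {phi f c S | S. S \<subseteq> A \<and> pay f c S \<le> ereal x}"
    using \<open>0 \<le> x\<close> by (auto simp: pay_def)
  then have "max_obj phi A f c x \<in> {phi f c S | S. S \<subseteq> A \<and> pay f c S \<le> ereal x}"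
    unfolding max_obj_def using finite_affordable_values[OF assms(1)] by (intro Max_in) auto
  with that show ?thesis by auto
qed

lemma max_obj_eqI:
  assumes "finite A" "T \<subseteq> A" "pay f c T \<le> ereal x" "phi f c T = M"
    and "\<And>S. S \<subseteq> A \<Longrightarrow> pay f c S \<le> ereal x \<Longrightarrow> phi f c S \<le> M"
  shows "max_obj phi A f c x = M"
  unfolding max_obj_def using finite_affordable_values[OF assms(1)] assms(2-) by (intro Max_eqI) auto

section \<open>The upper bound\<close>

lemma bin_count_le_ceiling:
  fixes b B :: real and m :: nat
  assumes "0 < b" "b \<le> B" "m \<le> 1 \<or> real m * b / 2 < B"
  shows "real m \<le> of_int \<lceil>2 * B / b\<rceil> - 1"
proof -
  have "real m < 2 * B / b"
  proof (cases "m \<le> 1")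
    case True
    moreover have "2 \<le> 2 * B / b" using assms(1,2) by (simp add: field_simps)
    ultimately show ?thesis by simp
  next
    case False
    then show ?thesis using assms by (simp add: field_simps)
  qed
  then have "int m < \<lceil>2 * B / b\<rceil>" by (simp add: less_ceiling_iff)
  then show ?thesis by linarith
qed

lemma pay_bin_le:
  assumes vi: "valid_instance A f c" and sm: "submodular_on A f"
    and single: "\<forall>i\<in>A. pay f c {i} \<le> ereal b"
    and "S \<subseteq> A" "pay f c S < \<infinity>" and packing: "bin_packing b (payment f c S) S PP" and "P \<in> PP"
  shows "pay f c P \<le> ereal b"
proof -
  have "P \<subseteq> S" using packing \<open>P \<in> PP\<close> by (auto simp: bin_packing_def partition_on_def)
  consider "card P = 1" | "sum (payment f c S) P \<le> b"
    using packing \<open>P \<in> PP\<close> unfolding bin_packing_def by blast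
  then show ?thesis
  proof cases
    case 1
    then show ?thesis using single \<open>P \<subseteq> S\<close> \<open>S \<subseteq> A\<close> by (auto simp: card_1_singleton_iff)
  next
    case 2
    have "pay f c P \<le> ereal (sum (payment f c S) P)"
      using pay_subset_le_sum_payment[OF vi sm \<open>S \<subseteq> A\<close> \<open>pay f c S < \<infinity>\<close> \<open>P \<subseteq> S\<close>] .
    with 2 show ?thesis by (metis ereal_less_eq(3) order_trans)
  qed
qed

lemma obj_le_card_mult_max_obj:
  assumes vi: "valid_instance A f c" and sm: "submodular_on A f"
    and single: "\<forall>i\<in>A. pay f c {i} \<le> ereal b"
    and subadd: "disjoint_subadditive_on A (phi f c)"
    and "S \<subseteq> A" "pay f c S < \<infinity>" and packing: "bin_packing b (payment f c S) S PP" and "PP \<noteq> {}"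
  shows "phi f c S \<le> real (card PP) * max_obj phi A f c b"
proof -
  have "finite A" using valid_instanceD(1)[OF vi] .
  have part: "partition_on S PP" using packing unfolding bin_packing_def by blast
  have "finite PP" using finite_elements[OF finite_subset[OF \<open>S \<subseteq> A\<close> \<open>finite A\<close>] part] .
  have "phi f c S = phi f c (\<Union>PP)" using part by (simp add: partition_on_def)
  also have "\<dots> \<le> (\<Sum>P\<in>PP. phi f c P)"
    using \<open>finite PP\<close> \<open>PP \<noteq> {}\<close> partition_onD2[OF part] partition_onD1[OF part] \<open>S \<subseteq> A\<close>
    by (intro disjoint_subadditive_onD[OF subadd]) auto
  also have "\<dots> \<le> (\<Sum>P\<in>PP. max_obj phi A f c b)"
  proof (rule sum_mono)
    fix P assume "P \<in> PP"
    then have "P \<subseteq> A" using part \<open>S \<subseteq> A\<close> by (auto simp: partition_on_def)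
    moreover have "pay f c P \<le> ereal b"
      using pay_bin_le[OF vi sm single \<open>S \<subseteq> A\<close> \<open>pay f c S < \<infinity>\<close> packing \<open>P \<in> PP\<close>] .
    ultimately show "phi f c P \<le> max_obj phi A f c b" by (rule max_obj_ge[OF \<open>finite A\<close>])
  qed
  finally show ?thesis by simp
qed

lemma max_obj_le_mult:
  assumes vi: "valid_instance A f c" and sm: "submodular_on A f"
    and single: "\<forall>i\<in>A. pay f c {i} \<le> ereal b"
    and subadd: "disjoint_subadditive_on A (phi f c)" and "0 \<le> phi f c {}"
    and "0 \<le> b" "0 \<le> B" "1 \<le> K"
    and bins: "\<And>m. m \<le> card A \<Longrightarrow> m \<le> 1 \<or> real m * b / 2 < B \<Longrightarrow> real m \<le> K"
  shows "max_obj phi A f c B \<le> K * max_obj phi A f c b"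
proof -
  define Mb where "Mb = max_obj phi A f c b"
  have "finite A" using valid_instanceD(1)[OF vi] .
  have "phi f c {} \<le> Mb" unfolding Mb_def using \<open>finite A\<close> \<open>0 \<le> b\<close> by (rule max_obj_ge_empty)
  then have "0 \<le> Mb" using \<open>0 \<le> phi f c {}\<close> by linarith
  obtain S where "S \<subseteq> A" and pS: "pay f c S \<le> ereal B" and opt: "phi f c S = max_obj phi A f c B"
    using max_obj_attained[OF \<open>finite A\<close> \<open>0 \<le> B\<close>] .
  have "finite S" using \<open>finite A\<close> \<open>S \<subseteq> A\<close> finite_subset by blast
  have "pay f c S < \<infinity>" using pS by (rule order.strict_trans1) simp
  then have "ereal (sum (payment f c S) S) \<le> ereal B"
    using pS by (simp only: pay_eq_sum_payment[OF \<open>finite S\<close>, symmetric])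
  then have "sum (payment f c S) S \<le> B" by simp
  show ?thesis
  proof (cases "S = {}")
    case True
    then show ?thesis
      using opt \<open>phi f c {} \<le> Mb\<close> \<open>0 \<le> Mb\<close> mult_right_mono[OF \<open>1 \<le> K\<close>] unfolding Mb_def by force
  next
    case False
    obtain PP where packing: "bin_packing b (payment f c S) S PP" and "card PP \<le> card S"
      and few: "card PP \<le> 1 \<or> real (card PP) * b / 2 < sum (payment f c S) S"
      using bin_packing_exists[OF \<open>finite S\<close>] by blast
    have "PP \<noteq> {}" using packing False by (auto simp: bin_packing_def partition_on_def)
    have "card S \<le> card A" using \<open>finite A\<close> \<open>S \<subseteq> A\<close> by (rule card_mono)
    then have "card PP \<le> card A" using \<open>card PP \<le> card S\<close> by linarith
    moreover have "card PP \<le> 1 \<or> real (card PP) * b / 2 < B"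
      using few \<open>sum (payment f c S) S \<le> B\<close> by linarith
    ultimately have "real (card PP) \<le> K" by (rule bins)
    then have "real (card PP) * Mb \<le> K * Mb" using \<open>0 \<le> Mb\<close> by (rule mult_right_mono)
    moreover have "phi f c S \<le> real (card PP) * Mb"
      unfolding Mb_def using vi sm single subadd \<open>S \<subseteq> A\<close> \<open>pay f c S < \<infinity>\<close> packing \<open>PP \<noteq> {}\<close>
      by (rule obj_le_card_mult_max_obj)
    ultimately show ?thesis using opt unfolding Mb_def by simp
  qed
qed

lemma PoF_Submodular_le:
  assumes "0 < b" "b \<le> B" "1 \<le> n"
    and obj: "\<And>A f c. valid_instance A f c \<Longrightarrow> submodular_on A f
                \<Longrightarrow> disjoint_subadditive_on A (phi f c) \<and> 0 \<le> phi f c {}"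
  shows "PoF_Submodular phi n b B \<le> ereal (min (of_int \<lceil>2 * B / b\<rceil> - 1) (real n))"
  unfolding PoF_Submodular_def
proof (rule SUP_least, clarify)
  fix A f c
  assume vi: "valid_instance A f c" and sm: "submodular_on A f" and "card A \<le> n"
    and single: "\<forall>i\<in>A. pay f c {i} \<le> ereal b"
  define K where "K = min (of_int \<lceil>2 * B / b\<rceil> - 1) (real n)"
  have bins: "real m \<le> K" if "m \<le> card A" "m \<le> 1 \<or> real m * b / 2 < B" for m
    using bin_count_le_ceiling[OF \<open>0 < b\<close> \<open>b \<le> B\<close> that(2)] that(1) \<open>card A \<le> n\<close>
    unfolding K_def by simp
  have "1 \<le> K" using bin_count_le_ceiling[OF \<open>0 < b\<close> \<open>b \<le> B\<close>, of 1] \<open>1 \<le> n\<close>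
    unfolding K_def by simp
  have "phi f c {} \<le> max_obj phi A f c b"
    using valid_instanceD(1)[OF vi] \<open>0 < b\<close> by (intro max_obj_ge_empty) auto
  moreover have "max_obj phi A f c B \<le> K * max_obj phi A f c b"
    using obj[OF vi sm] assms(1,2) \<open>1 \<le> K\<close>
    by (intro max_obj_le_mult[OF vi sm single _ _ _ _ _ bins]) auto
  ultimately have "pof phi A f c b B \<le> K"
    using obj[OF vi sm] \<open>1 \<le> K\<close> unfolding pof_def
    by (cases "max_obj phi A f c b = 0") (auto simp: pos_divide_le_eq)
  then show "ereal (pof phi A f c b B) \<le> ereal K" by simp
qed

section \<open>The lower bound\<close>

definition uniform_reward :: "nat \<Rightarrow> nat set \<Rightarrow> real" where
  "uniform_reward K S = real (card (S \<inter> {..<K})) / real K"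

lemma marg_uniform_reward:
  assumes "S \<subseteq> {..<K}" "i \<in> S"
  shows "marg (uniform_reward K) S i = 1 / real K"
proof -
  have "finite S" using assms(1) finite_subset by blast
  then have "card S = Suc (card (S - {i}))" using assms(2) by (rule card_Suc_Diff1[symmetric])
  then have "real (card S) - real (card (S - {i})) = 1" by simp
  moreover have "S \<inter> {..<K} = S" "(S - {i}) \<inter> {..<K} = S - {i}" using assms(1) by auto
  ultimately show ?thesis
    unfolding marg_def uniform_reward_def by (simp only: diff_divide_distrib[symmetric])
qed

lemma pay_uniform_reward:
  assumes "S \<subseteq> {..<K}"
  shows "pay (uniform_reward K) (\<lambda>_. t / real K) S = ereal (real (card S) * t)"
proof -
  have "pay (uniform_reward K) (\<lambda>_. t / real K) S = (\<Sum>i\<in>S. ereal t)"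
    unfolding pay_def
  proof (rule sum.cong)
    fix i assume "i \<in> S"
    then have "0 < real K" using assms by auto
    with \<open>i \<in> S\<close> show "(if marg (uniform_reward K) S i = 0 then if t / real K = 0 then 0 else \<infinity>
        else ereal (t / real K / marg (uniform_reward K) S i)) = ereal t"
      using marg_uniform_reward[OF assms] by simp
  qed simp
  then show ?thesis by simp
qed

lemma valid_instance_uniform_reward:
  assumes "0 \<le> t"
  shows "valid_instance {..<K} (uniform_reward K) (\<lambda>_. t / real K)"
  unfolding valid_instance_def uniform_reward_def
proof (intro conjI allI impI ballI)
  fix S :: "nat set"
  have "card (S \<inter> {..<K}) \<le> K" using card_mono[of "{..<K}" "S \<inter> {..<K}"] by auto
  then show "0 \<le> real (card (S \<inter> {..<K})) / real K" "real (card (S \<inter> {..<K})) / real K \<le> 1"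
    by (auto simp: divide_le_eq_1)
next
  fix S T :: "nat set" assume "S \<subseteq> T"
  then have "card (S \<inter> {..<K}) \<le> card (T \<inter> {..<K})" by (intro card_mono) auto
  then show "real (card (S \<inter> {..<K})) / real K \<le> real (card (T \<inter> {..<K})) / real K"
    by (simp add: divide_right_mono)
qed (use assms in simp_all)

lemma submodular_on_uniform_reward: "submodular_on {..<K} (uniform_reward K)"
  unfolding submodular_on_def
proof (intro allI impI)
  fix S S' i assume "S \<subseteq> S'" "S' \<subseteq> {..<K}" "i \<in> S"
  then show "marg (uniform_reward K) S' i \<le> marg (uniform_reward K) S i"
    using marg_uniform_reward[of S' K i] marg_uniform_reward[of S K i] by auto
qed

lemma pof_uniform_reward:
  assumes "1 \<le> K" "0 < v"
    and phi: "\<And>S. S \<subseteq> {..<K} \<Longrightarrow> phi (uniform_reward K) (\<lambda>_. t / real K) S = real (card S) * v"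
    and "b / 2 < t" "t \<le> b" "real K * t \<le> B"
  shows "pof phi {..<K} (uniform_reward K) (\<lambda>_. t / real K) b B = real K"
proof -
  have "max_obj phi {..<K} (uniform_reward K) (\<lambda>_. t / real K) b = v"
  proof (rule max_obj_eqI[where T = "{0}"])
    fix S assume S: "S \<subseteq> {..<K}" "pay (uniform_reward K) (\<lambda>_. t / real K) S \<le> ereal b"
    have "card S \<le> 1"
    proof (rule ccontr)
      assume "\<not> card S \<le> 1"
      then have "2 * t \<le> real (card S) * t" using assms(4,5) by (intro mult_right_mono) auto
      then show False using S assms(4) by (simp add: pay_uniform_reward)
    qed
    then show "phi (uniform_reward K) (\<lambda>_. t / real K) S \<le> v" using phi[OF S(1)] \<open>0 < v\<close> by simp
  qed (use assms in \<open>auto simp: pay_uniform_reward\<close>)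
  moreover have "max_obj phi {..<K} (uniform_reward K) (\<lambda>_. t / real K) B = real K * v"
  proof (rule max_obj_eqI[where T = "{..<K}"])
    fix S assume "S \<subseteq> {..<K}"
    then have "real (card S) \<le> real K" using card_mono[of "{..<K}" S] by simp
    then show "phi (uniform_reward K) (\<lambda>_. t / real K) S \<le> real K * v"
      using phi[OF \<open>S \<subseteq> {..<K}\<close>] \<open>0 < v\<close> by (simp add: mult_right_mono)
  qed (use assms in \<open>auto simp: pay_uniform_reward\<close>)
  ultimately show ?thesis using \<open>0 < v\<close> by (simp add: pof_def)
qed

lemma reward_obj_uniform_reward:
  "\<exists>v>0. \<forall>S\<subseteq>{..<K}. reward_obj (uniform_reward K) c S = real (card S) * v" if "1 \<le> K"
proof (intro exI[of _ "1 / real K"] conjI allI impI)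
  show "0 < 1 / real K" using that by simp
  fix S :: "nat set" assume "S \<subseteq> {..<K}"
  then show "reward_obj (uniform_reward K) c S = real (card S) * (1 / real K)"
    by (simp add: reward_obj_def uniform_reward_def Int_absorb2)
qed

lemma welfare_obj_uniform_reward:
  "\<exists>v>0. \<forall>S\<subseteq>{..<K}. welfare_obj (uniform_reward K) (\<lambda>_. t / real K) S = real (card S) * v"
  if "1 \<le> K" "t < 1"
proof (intro exI[of _ "(1 - t) / real K"] conjI allI impI)
  show "0 < (1 - t) / real K" using that by simp
  fix S :: "nat set" assume "S \<subseteq> {..<K}"
  then show "welfare_obj (uniform_reward K) (\<lambda>_. t / real K) S = real (card S) * ((1 - t) / real K)"
    by (simp add: welfare_obj_def uniform_reward_def Int_absorb2 algebra_simps diff_divide_distrib)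
qed

lemma PoF_Submodular_ge:
  assumes "0 < b" "b \<le> B" "B \<le> 1" "1 \<le> n"
    and obj: "\<And>K t. 1 \<le> K \<Longrightarrow> t < 1 \<Longrightarrow> \<exists>v>0. \<forall>S\<subseteq>{..<K}.
                phi (uniform_reward K) (\<lambda>_. t / real K) S = real (card S) * v"
  shows "ereal (min (of_int \<lceil>2 * B / b\<rceil> - 1) (real n)) \<le> PoF_Submodular phi n b B"
proof -
  define K where "K = nat (min (\<lceil>2 * B / b\<rceil> - 1) (int n))"
  have K_eq: "real K = min (of_int \<lceil>2 * B / b\<rceil> - 1) (real n)"
    using bin_count_le_ceiling[OF assms(1,2), of 1] \<open>1 \<le> n\<close> unfolding K_def by linarith
  then have "1 \<le> K" "K \<le> n"
    using bin_count_le_ceiling[OF assms(1,2), of 1] \<open>1 \<le> n\<close> by linarith+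
  have "real K < 2 * B / b" using K_eq ceiling_correct[of "2 * B / b"] by linarith
  then have "b / 2 < min b (B / real K)" using \<open>0 < b\<close> \<open>1 \<le> K\<close> by (simp add: field_simps)
  then obtain t where t: "b / 2 < t" "t < min b (B / real K)" using dense by blast
  then have "t \<le> b" "t < 1" "real K * t \<le> B" "0 \<le> t"
    using assms(1-3) \<open>1 \<le> K\<close> by (auto simp: field_simps)
  obtain v where "0 < v"
    and phi: "\<forall>S\<subseteq>{..<K}. phi (uniform_reward K) (\<lambda>_. t / real K) S = real (card S) * v"
    using obj[OF \<open>1 \<le> K\<close> \<open>t < 1\<close>] by blast
  have "({..<K}, uniform_reward K, \<lambda>_. t / real K)
      \<in> {(A, f, c). valid_instance A f c \<and> submodular_on A f \<and> card A \<le> n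
                 \<and> (\<forall>i\<in>A. pay f c {i} \<le> ereal b)}"
    using valid_instance_uniform_reward[OF \<open>0 \<le> t\<close>] submodular_on_uniform_reward \<open>K \<le> n\<close>
      pay_uniform_reward[of "{_}" K t] \<open>t \<le> b\<close> by auto
  then have "ereal (pof phi {..<K} (uniform_reward K) (\<lambda>_. t / real K) b B) \<le> PoF_Submodular phi n b B"
    unfolding PoF_Submodular_def by (rule SUP_upper2) simp
  then show ?thesis
    using pof_uniform_reward[OF \<open>1 \<le> K\<close> \<open>0 < v\<close> _ t(1) \<open>t \<le> b\<close> \<open>real K * t \<le> B\<close>] phi K_eq by simp
qed

theorem mainTheorem11:
  fixes b B :: real and n :: nat
  assumes "0 < b" "b \<le> B" "B \<le> 1" "1 \<le> n"
  shows "PoF_Reward_Submodular n b B = ereal (min (of_int \<lceil>2 * B / b\<rceil> - 1) (real n))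
       \<and> PoF_Welfare_Submodular n b B = ereal (min (of_int \<lceil>2 * B / b\<rceil> - 1) (real n))
       \<and> min (of_int \<lceil>2 * B / b\<rceil> - 1) (real n) \<le> min (2 * B / b) (real n)"
proof (intro conjI)
  show "PoF_Reward_Submodular n b B = ereal (min (of_int \<lceil>2 * B / b\<rceil> - 1) (real n))"
    using PoF_Submodular_le[OF assms(1,2,4) reward_obj_subadditive]
      PoF_Submodular_ge[OF assms reward_obj_uniform_reward] by (rule antisym)
  show "PoF_Welfare_Submodular n b B = ereal (min (of_int \<lceil>2 * B / b\<rceil> - 1) (real n))"
    using PoF_Submodular_le[OF assms(1,2,4) welfare_obj_subadditive]
      PoF_Submodular_ge[OF assms welfare_obj_uniform_reward] by (rule antisym)
  have "of_int \<lceil>2 * B / b\<rceil> - 1 \<le> 2 * B / b" using ceiling_correct[of "2 * B / b"] by linarith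
  then show "min (of_int \<lceil>2 * B / b\<rceil> - 1) (real n) \<le> min (2 * B / b) (real n)"
    by (rule min.mono) simp
qed

end
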